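(* Let $G$ be a connected graph having a matching bond with $m$ edges. Consider the generalized Broadcast setting in which initially there are $k_1\ge1$ ignorant agents and $k_2\ge1$ source agents (all holding $\mathcal M$), all on pairwise distinct nodes. If $k_1+k_2\le m-1$, then the adversary has a winning strategy, i.e. it can prevent forever any ignorant agent from obtaining $\mathcal M$.
   Context: A bond of a graph is a minimal edge cut: a set of edges whose removal disconnects the graph, but such that removing all but any one of its edges leaves the graph connected. A matching bond is a bond whose edges are pairwise vertex-disjoint. Broadcast model (with several initial sources): a connected base graph $G=(V,E)$. Some agents (source agents) hold a message $\mathcal M$, the others (ignorant agents) do not; initially all agents occupy pairwise distinct nodes, the initial placement being chosen by the adversary. Time proceeds in synchronous rounds; in each round: (1) the adversary removes a (possibly empty) set $E'\subseteq E$ of edges such that $(V,E\setminus E')$ is connected; (2) each agent (agents have unique IDs, local memory, and see the entire current graph, the positions of all agents and which agents hold $\mathcal M$) chooses either to stay or to traverse an edge of $E\setminus E'$ incident to its current node; (3) agents move. Whenever an ignorant agent is at the same node as an agent holding $\mathcal M$, it receives $\mathcal M$ and becomes a source agent. The adversary is adaptive and knows the agents' strategy. *)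

theory Defs
  imports Main
begin

definition graph :: "'v set \<Rightarrow> 'v set set \<Rightarrow> bool" where
  "graph V E \<longleftrightarrow> finite V \<and> (\<forall>e\<in>E. e \<subseteq> V \<and> card e = 2)"

definition edge_rel :: "'v set set \<Rightarrow> ('v \<times> 'v) set" where
  "edge_rel F = {(u, v). {u, v} \<in> F}"

definition conn :: "'v set \<Rightarrow> 'v set set \<Rightarrow> bool" where
  "conn V F \<longleftrightarrow> (\<forall>u\<in>V. \<forall>v\<in>V. (u, v) \<in> (edge_rel F)\<^sup>*)"

definition bond :: "'v set \<Rightarrow> 'v set set \<Rightarrow> 'v set set \<Rightarrow> bool" where
  "bond V E B \<longleftrightarrow> B \<subseteq> E \<and> \<not> conn V (E - B) \<and> (\<forall>e\<in>B. conn V (E - (B - {e})))"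

definition matching_bond :: "'v set \<Rightarrow> 'v set set \<Rightarrow> 'v set set \<Rightarrow> bool" where
  "matching_bond V E B \<longleftrightarrow> bond V E B \<and> (\<forall>e1\<in>B. \<forall>e2\<in>B. e1 \<noteq> e2 \<longrightarrow> e1 \<inter> e2 = {})"

(* Agents are natural numbers.  A (deterministic, full-information) agent strategy sigma maps
   the initial placement p0 and the list of edge sets removed by the adversary in rounds
   0..t (including the current round t) to the node each agent i wants to be at after round t.
   Since everything else (positions, informed agents) is determined by these data, this is the
   most general deterministic strategy.  A requested move that is neither staying nor
   traversing a present edge is treated as staying. *)
primrec run_pos :: "'v set set \<Rightarrow> (nat \<Rightarrow> 'v) \<Rightarrow> ((nat \<Rightarrow> 'v) \<Rightarrow> 'v set set list \<Rightarrow> nat \<Rightarrow> 'v)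
    \<Rightarrow> (nat \<Rightarrow> 'v set set) \<Rightarrow> nat \<Rightarrow> nat \<Rightarrow> 'v" where
  "run_pos E p0 \<sigma> R 0 = p0"
| "run_pos E p0 \<sigma> R (Suc t) =
     (\<lambda>i. let p = run_pos E p0 \<sigma> R t i; q = \<sigma> p0 (map R [0..<Suc t]) i
          in if q = p \<or> {p, q} \<in> E - R t then q else p)"

primrec informed :: "nat set \<Rightarrow> nat set \<Rightarrow> (nat \<Rightarrow> nat \<Rightarrow> 'v) \<Rightarrow> nat \<Rightarrow> nat set" where
  "informed A S0 pos 0 = S0"
| "informed A S0 pos (Suc t) =
     informed A S0 pos t \<union> {i\<in>A. \<exists>j\<in>informed A S0 pos t. pos (Suc t) i = pos (Suc t) j}"

end

theory Submission
  imports Defs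
begin

text \<open>
  The bond B splits V into a side X (the vertices reachable from a fixed vertex without using B)
  and its complement, and every edge of B has exactly one endpoint in X.  Put the ignorant agents
  on the X-endpoints and the sources on the other endpoints of distinct edges of B.  Since fewer
  than card B agents exist and B is a matching, in every round some edge e of B carries no agent;
  the adversary removes B - {e}, which keeps the graph connected by minimality of the bond.  The
  only remaining edge between the two sides is e, which no agent can use, so no agent ever
  changes side and the ignorant agents never meet a source.
\<close>

lemma run_pos_cong:
  "(\<And>s. s < t \<Longrightarrow> R s = R' s) \<Longrightarrow> run_pos E p0 \<sigma> R t = run_pos E p0 \<sigma> R' t"
proof (induction t)
  case 0
  then show ?case by simp
next
  case (Suc t)
  have "map R [0..<Suc t] = map R' [0..<Suc t]" and "R t = R' t"
    using Suc.prems by auto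
  moreover have "run_pos E p0 \<sigma> R t = run_pos E p0 \<sigma> R' t"
    using Suc by simp
  ultimately show ?case by (simp only: run_pos.simps)
qed

text \<open>Removals of rounds 0, ..., t-1 by an adversary reacting to the current positions with
  the rule ch; the adaptive removal sequence is read off the diagonal.\<close>
primrec adversary_history :: "((nat \<Rightarrow> 'v) \<Rightarrow> 'v set set) \<Rightarrow> 'v set set \<Rightarrow> (nat \<Rightarrow> 'v)
    \<Rightarrow> ((nat \<Rightarrow> 'v) \<Rightarrow> 'v set set list \<Rightarrow> nat \<Rightarrow> 'v) \<Rightarrow> nat \<Rightarrow> 'v set set list" where
  "adversary_history ch E p0 \<sigma> 0 = []"
| "adversary_history ch E p0 \<sigma> (Suc t) = adversary_history ch E p0 \<sigma> t
     @ [ch (run_pos E p0 \<sigma> (\<lambda>s. adversary_history ch E p0 \<sigma> t ! s) t)]"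

lemma length_adversary_history [simp]: "length (adversary_history ch E p0 \<sigma> t) = t"
  by (induction t) auto

lemma adversary_history_nth:
  "s < t \<Longrightarrow> adversary_history ch E p0 \<sigma> t ! s = adversary_history ch E p0 \<sigma> (Suc s) ! s"
  by (induction t) (auto simp: nth_append less_Suc_eq)

lemma adaptive_removals_exist: "\<exists>R. \<forall>t. R t = ch (run_pos E p0 \<sigma> R t)"
proof (intro exI allI)
  define R where "R s = adversary_history ch E p0 \<sigma> (Suc s) ! s" for s
  fix t
  have "run_pos E p0 \<sigma> (\<lambda>s. adversary_history ch E p0 \<sigma> t ! s) t = run_pos E p0 \<sigma> R t"
    by (rule run_pos_cong) (simp add: R_def adversary_history_nth)
  then show "R t = ch (run_pos E p0 \<sigma> R t)"
    by (simp add: R_def nth_append)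
qed

lemma rtrancl_edge_rel_insert_cases:
  assumes "(u, v) \<in> (edge_rel (insert {a, b} F))\<^sup>*"
  shows "(u, v) \<in> (edge_rel F)\<^sup>* \<or> (u, a) \<in> (edge_rel F)\<^sup>* \<or> (u, b) \<in> (edge_rel F)\<^sup>*"
  using assms
proof (induction rule: rtrancl_induct)
  case base
  then show ?case by simp
next
  case (step y z)
  then consider "(y, z) \<in> edge_rel F" | "y = a \<or> y = b"
    by (auto simp: edge_rel_def doubleton_eq_iff)
  then show ?case
  proof cases
    case 1
    then show ?thesis using step.IH by (meson rtrancl.rtrancl_into_rtrancl)
  next
    case 2
    then show ?thesis using step.IH by blast
  qed
qed

lemma rtrancl_edge_rel_insert_absorb:
  assumes "(u, v) \<in> (edge_rel (insert {a, b} F))\<^sup>*"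
    and "(u, a) \<in> (edge_rel F)\<^sup>*" and "(u, b) \<in> (edge_rel F)\<^sup>*"
  shows "(u, v) \<in> (edge_rel F)\<^sup>*"
  using assms(1)
proof (induction rule: rtrancl_induct)
  case base
  then show ?case by simp
next
  case (step y z)
  then consider "(y, z) \<in> edge_rel F" | "z = a \<or> z = b"
    by (auto simp: edge_rel_def doubleton_eq_iff)
  then show ?case
  proof cases
    case 1
    then show ?thesis using step.IH by (meson rtrancl.rtrancl_into_rtrancl)
  next
    case 2
    then show ?thesis using assms by blast
  qed
qed

lemma bond_side:
  assumes "graph V E" and "bond V E B"
  obtains X where "\<And>e. e \<in> B \<Longrightarrow> \<exists>a b. e = {a, b} \<and> a \<in> X \<and> b \<notin> X"
    and "\<And>u v. {u, v} \<in> E - B \<Longrightarrow> u \<in> X \<longleftrightarrow> v \<in> X"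
proof -
  have BE: "B \<subseteq> E" and cut: "\<not> conn V (E - B)"
    and minimal: "\<And>e. e \<in> B \<Longrightarrow> conn V (E - (B - {e}))"
    using assms(2) unfolding bond_def by auto
  obtain u0 w0 where "u0 \<in> V" "w0 \<in> V" and not_reach: "(u0, w0) \<notin> (edge_rel (E - B))\<^sup>*"
    using cut unfolding conn_def by blast
  define X where "X = {v. (u0, v) \<in> (edge_rel (E - B))\<^sup>*}"
  have "\<exists>a b. e = {a, b} \<and> a \<in> X \<and> b \<notin> X" if "e \<in> B" for e
  proof -
    obtain a b where ab: "e = {a, b}"
      using assms(1) BE \<open>e \<in> B\<close> unfolding graph_def by (meson card_2_iff subsetD)
    have "E - (B - {e}) = insert {a, b} (E - B)"
      using \<open>e \<in> B\<close> BE ab by auto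
    then have reach: "(u0, w0) \<in> (edge_rel (insert {a, b} (E - B)))\<^sup>*"
      using minimal[OF \<open>e \<in> B\<close>] \<open>u0 \<in> V\<close> \<open>w0 \<in> V\<close> unfolding conn_def by simp
    have "a \<in> X \<or> b \<in> X" and "\<not> (a \<in> X \<and> b \<in> X)"
      using rtrancl_edge_rel_insert_cases[OF reach] rtrancl_edge_rel_insert_absorb[OF reach]
        not_reach unfolding X_def by auto
    then show ?thesis
      using ab by (metis insert_commute)
  qed
  moreover have "u \<in> X \<longleftrightarrow> v \<in> X" if "{u, v} \<in> E - B" for u v
  proof -
    have "(u, v) \<in> edge_rel (E - B)" and "(v, u) \<in> edge_rel (E - B)"
      using that by (auto simp: edge_rel_def insert_commute)
    then show ?thesis
      unfolding X_def by (meson mem_Collect_eq rtrancl.rtrancl_into_rtrancl)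
  qed
  ultimately show thesis
    using that by blast
qed

lemma matching_has_unoccupied_edge:
  assumes "finite B" and disjoint: "\<forall>e1\<in>B. \<forall>e2\<in>B. e1 \<noteq> e2 \<longrightarrow> e1 \<inter> e2 = {}"
    and "finite P" and "card P < card B"
  shows "\<exists>e\<in>B. e \<inter> P = {}"
proof (rule ccontr)
  assume "\<not> (\<exists>e\<in>B. e \<inter> P = {})"
  then have "B = (\<Union>v\<in>P. {e\<in>B. v \<in> e})"
    by blast
  then have "card B \<le> (\<Sum>v\<in>P. card {e\<in>B. v \<in> e})"
    using card_UN_le[OF \<open>finite P\<close>, of "\<lambda>v. {e\<in>B. v \<in> e}"] by simp
  also have "\<dots> \<le> (\<Sum>v\<in>P. 1)"
  proof (rule sum_mono)
    fix v
    have "\<forall>e1\<in>{e\<in>B. v \<in> e}. \<forall>e2\<in>{e\<in>B. v \<in> e}. e1 = e2"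
      using disjoint by blast
    then show "card {e\<in>B. v \<in> e} \<le> 1"
      using card_le_Suc0_iff_eq[of "{e\<in>B. v \<in> e}"] \<open>finite B\<close> by simp
  qed
  finally show False
    using \<open>card P < card B\<close> by simp
qed

lemma matching_endpoint_placement:
  assumes "finite B" and disjoint: "\<forall>e1\<in>B. \<forall>e2\<in>B. e1 \<noteq> e2 \<longrightarrow> e1 \<inter> e2 = {}"
    and crossing: "\<And>e. e \<in> B \<Longrightarrow> \<exists>a b. e = {a, b} \<and> a \<in> X \<and> b \<notin> X"
    and "n \<le> card B"
  obtains p0 where "inj_on p0 {..<n}" and "p0 ` {..<n} \<subseteq> \<Union>B"
    and "\<And>i. i < n \<Longrightarrow> p0 i \<in> X \<longleftrightarrow> i < k"
proof -
  obtain f where f: "bij_betw f {..<card B} B"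
    using ex_bij_betw_nat_finite[OF \<open>finite B\<close>] by (auto simp: lessThan_atLeast0)
  have fB: "f i \<in> B" if "i < n" for i
    using bij_betw_apply[OF f] that \<open>n \<le> card B\<close> by simp
  have "\<forall>i. \<exists>v. i < n \<longrightarrow> v \<in> f i \<and> (v \<in> X \<longleftrightarrow> i < k)"
  proof (intro allI)
    fix i
    show "\<exists>v. i < n \<longrightarrow> v \<in> f i \<and> (v \<in> X \<longleftrightarrow> i < k)"
    proof (cases "i < n")
      case True
      then show ?thesis
        using crossing[OF fB[OF True]] by blast
    qed simp
  qed
  from choice[OF this] obtain p0
    where p0: "\<forall>i. i < n \<longrightarrow> p0 i \<in> f i \<and> (p0 i \<in> X \<longleftrightarrow> i < k)" ..
  show thesis
  proof
    show "inj_on p0 {..<n}"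
    proof (rule inj_onI)
      fix i j
      assume "i \<in> {..<n}" "j \<in> {..<n}" "p0 i = p0 j"
      then have "f i \<inter> f j \<noteq> {}"
        using p0 by auto
      then have "f i = f j"
        using fB \<open>i \<in> {..<n}\<close> \<open>j \<in> {..<n}\<close> disjoint by blast
      then show "i = j"
        using f \<open>i \<in> {..<n}\<close> \<open>j \<in> {..<n}\<close> \<open>n \<le> card B\<close>
        unfolding bij_betw_def inj_on_def by auto
    qed
    show "p0 ` {..<n} \<subseteq> \<Union>B"
      using p0 fB by blast
    show "p0 i \<in> X \<longleftrightarrow> i < k" if "i < n" for i
      using p0 that by blast
  qed
qed

text \<open>Agent i can only traverse edges of E - B, which never join the two sides.\<close>
lemma run_pos_stays_on_side:
  assumes closed: "\<And>u v. {u, v} \<in> E - B \<Longrightarrow> u \<in> X \<longleftrightarrow> v \<in> X"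
    and avoid: "\<And>t. \<exists>e. B - {e} \<subseteq> R t \<and> run_pos E p0 \<sigma> R t i \<notin> e"
  shows "run_pos E p0 \<sigma> R t i \<in> X \<longleftrightarrow> p0 i \<in> X"
proof (induction t)
  case 0
  then show ?case by simp
next
  case (Suc t)
  define p where "p = run_pos E p0 \<sigma> R t i"
  define q where "q = \<sigma> p0 (map R [0..<Suc t]) i"
  have step: "run_pos E p0 \<sigma> R (Suc t) i = (if q = p \<or> {p, q} \<in> E - R t then q else p)"
    by (simp add: p_def q_def Let_def)
  obtain e where "B - {e} \<subseteq> R t" and "p \<notin> e"
    using avoid unfolding p_def by blast
  then have "{p, q} \<in> E - R t \<Longrightarrow> {p, q} \<in> E - B"
    by auto
  then have "run_pos E p0 \<sigma> R (Suc t) i \<in> X \<longleftrightarrow> p \<in> X"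
    using step closed by auto
  then show ?case
    using Suc.IH by (simp add: p_def)
qed

lemma informed_constant:
  assumes "\<And>t i j. i \<in> A - S0 \<Longrightarrow> j \<in> S0 \<Longrightarrow> pos t i \<noteq> pos t j"
  shows "informed A S0 pos t = S0"
  by (induction t) (use assms in auto)

lemma informed_constant_if_sides_separated:
  assumes closed: "\<And>u v. {u, v} \<in> E - B \<Longrightarrow> u \<in> X \<longleftrightarrow> v \<in> X"
    and avoid: "\<And>t. \<exists>e\<in>B. R t = B - {e} \<and> (\<forall>i<n. run_pos E p0 \<sigma> R t i \<notin> e)"
    and side0: "\<And>i. i < n \<Longrightarrow> p0 i \<in> X \<longleftrightarrow> i < k"
  shows "informed {..<n} {k..<n} (run_pos E p0 \<sigma> R) t = {k..<n}"
proof (rule informed_constant)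
  have side: "run_pos E p0 \<sigma> R t i \<in> X \<longleftrightarrow> i < k" if "i < n" for t i
  proof -
    have "\<exists>e. B - {e} \<subseteq> R t \<and> run_pos E p0 \<sigma> R t i \<notin> e" for t
      using avoid[of t] that by blast
    then show ?thesis
      using run_pos_stays_on_side[OF closed] side0[OF that] by simp
  qed
  fix t i j
  assume "i \<in> {..<n} - {k..<n}" and "j \<in> {k..<n}"
  then show "run_pos E p0 \<sigma> R t i \<noteq> run_pos E p0 \<sigma> R t j"
    using side[of i t] side[of j t] by auto
qed

lemma avoiding_removals_exist:
  assumes "finite B" and disjoint: "\<forall>e1\<in>B. \<forall>e2\<in>B. e1 \<noteq> e2 \<longrightarrow> e1 \<inter> e2 = {}"
    and "n < card B"
  obtains R where "\<And>t. \<exists>e\<in>B. R t = B - {e} \<and> (\<forall>i<n. run_pos E p0 \<sigma> R t i \<notin> e)"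
proof -
  define ch where "ch p = B - {SOME e. e \<in> B \<and> e \<inter> p ` {..<n} = {}}" for p :: "nat \<Rightarrow> 'a"
  have ch: "\<exists>e\<in>B. ch p = B - {e} \<and> e \<inter> p ` {..<n} = {}" for p
  proof -
    have "card (p ` {..<n}) < card B"
      using card_image_le[of "{..<n}" p] \<open>n < card B\<close> by simp
    then have "\<exists>e. e \<in> B \<and> e \<inter> p ` {..<n} = {}"
      using matching_has_unoccupied_edge[OF \<open>finite B\<close> disjoint] by blast
    then show ?thesis
      unfolding ch_def using someI_ex[of "\<lambda>e. e \<in> B \<and> e \<inter> p ` {..<n} = {}"] by blast
  qed
  from adaptive_removals_exist obtain R where R: "\<forall>t. R t = ch (run_pos E p0 \<sigma> R t)" ..
  have "\<exists>e\<in>B. R t = B - {e} \<and> (\<forall>i<n. run_pos E p0 \<sigma> R t i \<notin> e)" for t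
  proof -
    obtain e where "e \<in> B" and ch_e: "ch (run_pos E p0 \<sigma> R t) = B - {e}"
      and "e \<inter> run_pos E p0 \<sigma> R t ` {..<n} = {}"
      using ch[of "run_pos E p0 \<sigma> R t"] by blast
    moreover have "R t = B - {e}"
      using R[rule_format, of t] ch_e by (rule trans)
    ultimately show ?thesis
      by blast
  qed
  then show thesis
    using that by blast
qed

lemma graph_finite_edges: "graph V E \<Longrightarrow> finite E"
proof -
  assume "graph V E"
  then have "E \<subseteq> Pow V" and "finite V"
    unfolding graph_def by auto
  then show "finite E"
    by (meson finite_Pow_iff finite_subset)
qed

theorem theorem7:
  fixes V :: "'v set" and E B :: "'v set set" and k1 k2 :: nat
  assumes "graph V E" and "conn V E" and "matching_bond V E B"
    and "k1 \<ge> 1" and "k2 \<ge> 1" and "k1 + k2 \<le> card B - 1"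
  shows "\<forall>\<sigma> :: (nat \<Rightarrow> 'v) \<Rightarrow> 'v set set list \<Rightarrow> nat \<Rightarrow> 'v.
           \<exists>p0 R. inj_on p0 {..<k1 + k2} \<and> p0 ` {..<k1 + k2} \<subseteq> V
             \<and> (\<forall>t. conn V (E - R t))
             \<and> (\<forall>t. informed {..<k1 + k2} {k1..<k1 + k2} (run_pos E p0 \<sigma> R) t = {k1..<k1 + k2})"
proof
  fix \<sigma> :: "(nat \<Rightarrow> 'v) \<Rightarrow> 'v set set list \<Rightarrow> nat \<Rightarrow> 'v"
  let ?n = "k1 + k2"
  have bond: "bond V E B" and disjoint: "\<forall>e1\<in>B. \<forall>e2\<in>B. e1 \<noteq> e2 \<longrightarrow> e1 \<inter> e2 = {}"
    using assms(3) unfolding matching_bond_def by auto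
  have "B \<subseteq> E" and minimal: "\<And>e. e \<in> B \<Longrightarrow> conn V (E - (B - {e}))"
    using bond unfolding bond_def by auto
  have "finite B"
    using \<open>B \<subseteq> E\<close> graph_finite_edges[OF assms(1)] by (rule finite_subset)
  have "\<Union>B \<subseteq> V"
    using \<open>B \<subseteq> E\<close> assms(1) unfolding graph_def by blast
  have n_less: "?n < card B"
    using assms(4-6) by linarith
  obtain X where crossing: "\<And>e. e \<in> B \<Longrightarrow> \<exists>a b. e = {a, b} \<and> a \<in> X \<and> b \<notin> X"
    and closed: "\<And>u v. {u, v} \<in> E - B \<Longrightarrow> u \<in> X \<longleftrightarrow> v \<in> X"
    using bond_side[OF assms(1) bond] by blast
  obtain p0 where inj: "inj_on p0 {..<?n}" and "p0 ` {..<?n} \<subseteq> \<Union>B"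
    and side0: "\<And>i. i < ?n \<Longrightarrow> p0 i \<in> X \<longleftrightarrow> i < k1"
    using matching_endpoint_placement[OF \<open>finite B\<close> disjoint crossing, of ?n] n_less by auto
  obtain R where removal: "\<And>t. \<exists>e\<in>B. R t = B - {e} \<and> (\<forall>i<?n. run_pos E p0 \<sigma> R t i \<notin> e)"
    using avoiding_removals_exist[OF \<open>finite B\<close> disjoint n_less] by blast
  have "conn V (E - R t)" for t
    using removal[of t] minimal by force
  moreover have "informed {..<?n} {k1..<?n} (run_pos E p0 \<sigma> R) t = {k1..<?n}" for t
    using informed_constant_if_sides_separated[OF closed removal side0] .
  ultimately show "\<exists>p0 R. inj_on p0 {..<?n} \<and> p0 ` {..<?n} \<subseteq> V \<and> (\<forall>t. conn V (E - R t))
      \<and> (\<forall>t. informed {..<?n} {k1..<?n} (run_pos E p0 \<sigma> R) t = {k1..<?n})"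
    using inj \<open>p0 ` {..<?n} \<subseteq> \<Union>B\<close> \<open>\<Union>B \<subseteq> V\<close>
    by (intro exI[of _ p0] exI[of _ R]) auto
qed

end
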